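(* Let $f:\{0,1\}^n\to\{\pm1\}$ be $k$-monotone. Then $\sum_{r=0}^{n-1}\mathbf I[f|_r]\le kn$.
   Context: A function $g:\{0,1\}^n\to\{0,1\}$ is monotone if $x\preceq y$ coordinatewise implies $g(x)\le g(y)$; it is $k$-monotone if it is the XOR of $k$ monotone functions. $f:\{0,1\}^n\to\{\pm1\}$ is $k$-monotone if $(1-f)/2$ is $k$-monotone. For $0\le r\le n$, $\binom{[n]}{r}=\{x\in\{0,1\}^n:\sum_ix_i=r\}$ with the uniform distribution and $f|_r$ is the restriction of $f$ to it. For $g:\binom{[n]}{r}\to\{\pm1\}$ and $i,j\in[n]$, $\mathbf I_{ij}[g]=2\Pr_x[g(x^{(i,j)})\ne g(x)]$, where $x$ is uniform on the slice and $x^{(i,j)}$ is $x$ with coordinates $i$ and $j$ swapped; the total influence is $\mathbf I[g]=\frac1n\sum_{1\le i<j\le n}\mathbf I_{ij}[g]$. *)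

theory Defs
  imports Complex_Main
begin

text \<open>Points of the cube {0,1}^n are represented as functions nat => bool
  (True = 1) that vanish outside the coordinates 0..n-1.\<close>

definition cube :: "nat \<Rightarrow> (nat \<Rightarrow> bool) set" where
  "cube n = {x. \<forall>i. n \<le> i \<longrightarrow> \<not> x i}"

definition bool_monotone :: "nat \<Rightarrow> ((nat \<Rightarrow> bool) \<Rightarrow> bool) \<Rightarrow> bool" where
  "bool_monotone n g \<longleftrightarrow>
     (\<forall>x\<in>cube n. \<forall>y\<in>cube n. (\<forall>i<n. x i \<longrightarrow> y i) \<longrightarrow> (g x \<longrightarrow> g y))"

definition k_monotone :: "nat \<Rightarrow> nat \<Rightarrow> ((nat \<Rightarrow> bool) \<Rightarrow> bool) \<Rightarrow> bool" where
  "k_monotone n k g \<longleftrightarrow>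
     (\<exists>gs :: nat \<Rightarrow> (nat \<Rightarrow> bool) \<Rightarrow> bool.
        (\<forall>j<k. bool_monotone n (gs j)) \<and>
        (\<forall>x\<in>cube n. g x = odd (card {j. j < k \<and> gs j x})))"

text \<open>f : {0,1}^n -> {+-1} is k-monotone iff (1-f)/2 is, i.e. the indicator of f x = -1.\<close>
definition pm_k_monotone :: "nat \<Rightarrow> nat \<Rightarrow> ((nat \<Rightarrow> bool) \<Rightarrow> real) \<Rightarrow> bool" where
  "pm_k_monotone n k f \<longleftrightarrow> k_monotone n k (\<lambda>x. (1 - f x) / 2 = 1)"

definition slice :: "nat \<Rightarrow> nat \<Rightarrow> (nat \<Rightarrow> bool) set" where
  "slice n r = {x \<in> cube n. card {i. i < n \<and> x i} = r}"

definition swap_coords :: "nat \<Rightarrow> nat \<Rightarrow> (nat \<Rightarrow> bool) \<Rightarrow> (nat \<Rightarrow> bool)" where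
  "swap_coords i j x = (\<lambda>l. if l = i then x j else if l = j then x i else x l)"

definition slice_inf_ij :: "nat \<Rightarrow> nat \<Rightarrow> ((nat \<Rightarrow> bool) \<Rightarrow> real) \<Rightarrow> nat \<Rightarrow> nat \<Rightarrow> real" where
  "slice_inf_ij n r g i j =
     2 * real (card {x \<in> slice n r. g (swap_coords i j x) \<noteq> g x}) / real (card (slice n r))"

definition slice_total_inf :: "nat \<Rightarrow> nat \<Rightarrow> ((nat \<Rightarrow> bool) \<Rightarrow> real) \<Rightarrow> real" where
  "slice_total_inf n r g =
     (1 / real n) * (\<Sum>j<n. \<Sum>i<j. slice_inf_ij n r g i j)"

end

theory Submission
  imports Defs
begin

text \<open>Compare each slice with the bipartite graph of edges between slices r and r+1. If two
  points of slice r differ by a transposition and f disagrees on them, then f changes along one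
  of the two edges through their common upper neighbour; double counting turns this into
  I[f|_r] \<le> n \<cdot> e_r(f), where e_r(f) is the fraction of edges of that layer along which f
  changes. For monotone g, e_r(g) is the increase of the density of g from slice r to slice r+1,
  so the e_r(g) telescope to at most 1. An edge along which the XOR of g_1, \<dots>, g_k changes is
  an edge along which some g_j changes, hence \<Sum>_r e_r(f) \<le> k.\<close>

lemma finite_cube: "finite (cube n)"
proof -
  have "cube n \<subseteq> (\<lambda>S i. i \<in> S) ` Pow {..<n}"
  proof
    fix x assume "x \<in> cube n"
    then have "x = (\<lambda>i. i \<in> {i. i < n \<and> x i})"
      by (auto simp: cube_def fun_eq_iff not_le[symmetric])
    then show "x \<in> (\<lambda>S i. i \<in> S) ` Pow {..<n}" by blast
  qed
  then show ?thesis by (rule finite_subset) auto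
qed

lemma finite_slice: "finite (slice n r)"
  using finite_cube[of n] unfolding slice_def by auto

lemma card_slice_pos: "r \<le> n \<Longrightarrow> card (slice n r) > 0"
proof -
  assume "r \<le> n"
  then have "{i. i < n \<and> i < r} = {..<r}" by auto
  with \<open>r \<le> n\<close> have "(\<lambda>i. i < r) \<in> slice n r"
    by (auto simp: slice_def cube_def)
  then show ?thesis using finite_slice by (auto simp: card_gt_0_iff)
qed

lemma card_zeros_slice:
  assumes "x \<in> slice n r"
  shows "card {i. i < n \<and> \<not> x i} = n - r"
proof -
  have "{i. i < n \<and> \<not> x i} = {..<n} - {i. i < n \<and> x i}" by auto
  with assms show ?thesis by (simp add: slice_def card_Diff_subset subset_iff)
qed

lemma slice_fun_upd_True:
  assumes "x \<in> slice n r" "i < n" "\<not> x i"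
  shows "x(i := True) \<in> slice n (Suc r)"
proof -
  have "{l. l < n \<and> (x(i := True)) l} = insert i {l. l < n \<and> x l}" using assms by auto
  with assms show ?thesis by (auto simp: slice_def cube_def)
qed

lemma slice_fun_upd_False:
  assumes "y \<in> slice n (Suc r)" "i < n" "y i"
  shows "y(i := False) \<in> slice n r"
proof -
  have "{l. l < n \<and> (y(i := False)) l} = {l. l < n \<and> y l} - {i}" by auto
  with assms show ?thesis by (auto simp: slice_def cube_def)
qed

lemma slice_swap_coords:
  assumes "x \<in> slice n r" "a < n" "b < n" "x a" "\<not> x b"
  shows "swap_coords a b x \<in> slice n r"
proof -
  have "swap_coords a b x = (x(b := True))(a := False)"
    using assms by (auto simp: swap_coords_def)
  then show ?thesis
    using assms slice_fun_upd_True slice_fun_upd_False by (metis fun_upd_apply)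
qed

lemma swap_coords_swap_coords [simp]: "swap_coords a b (swap_coords a b x) = x"
  by (rule ext) (simp add: swap_coords_def)

lemma swap_coords_commute: "swap_coords i j x = swap_coords j i x"
  by (rule ext) (simp add: swap_coords_def)

lemma swap_coords_eq_self: "x i = x j \<Longrightarrow> swap_coords i j x = x"
  by (rule ext) (simp add: swap_coords_def)

text \<open>An edge from slice r to slice r+1 is a pair (x, i) with x in slice r and x i = 0;
  its upper endpoint is x(i := True).\<close>

definition up_edges :: "nat \<Rightarrow> nat \<Rightarrow> ((nat \<Rightarrow> bool) \<times> nat) set" where
  "up_edges n r = Sigma (slice n r) (\<lambda>x. {i. i < n \<and> \<not> x i})"

definition sensitive_edges :: "nat \<Rightarrow> nat \<Rightarrow> ((nat \<Rightarrow> bool) \<Rightarrow> 'b) \<Rightarrow> ((nat \<Rightarrow> bool) \<times> nat) set" where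
  "sensitive_edges n r g = {(x, i) \<in> up_edges n r. g (x(i := True)) \<noteq> g x}"

definition edge_sensitivity :: "nat \<Rightarrow> nat \<Rightarrow> ((nat \<Rightarrow> bool) \<Rightarrow> 'b) \<Rightarrow> real" where
  "edge_sensitivity n r g = real (card (sensitive_edges n r g)) / real (card (up_edges n r))"

definition slice_density :: "nat \<Rightarrow> nat \<Rightarrow> ((nat \<Rightarrow> bool) \<Rightarrow> bool) \<Rightarrow> real" where
  "slice_density n r g = real (card {x \<in> slice n r. g x}) / real (card (slice n r))"

lemma finite_up_edges: "finite (up_edges n r)"
  unfolding up_edges_def using finite_slice by (intro finite_SigmaI) auto

lemma finite_sensitive_edges: "finite (sensitive_edges n r g)"
  unfolding sensitive_edges_def using finite_up_edges by (simp add: case_prod_unfold)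

lemma card_up_edges_lower:
  "card {(x, i) \<in> up_edges n r. P x} = card {x \<in> slice n r. P x} * (n - r)"
proof -
  have "{(x, i) \<in> up_edges n r. P x} = Sigma {x \<in> slice n r. P x} (\<lambda>x. {i. i < n \<and> \<not> x i})"
    by (auto simp: up_edges_def)
  moreover have "(\<Sum>x\<in>{x \<in> slice n r. P x}. card {i. i < n \<and> \<not> x i}) =
      (\<Sum>x\<in>{x \<in> slice n r. P x}. n - r)"
    by (rule sum.cong) (auto simp: card_zeros_slice)
  ultimately show ?thesis using finite_slice by simp
qed

lemma card_up_edges_upper:
  "card {(x, i) \<in> up_edges n r. P (x(i := True))} = card {y \<in> slice n (Suc r). P y} * Suc r"
proof -
  let ?E = "{(x, i) \<in> up_edges n r. P (x(i := True))}"
  let ?Y = "{y \<in> slice n (Suc r). P y}"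
  have "bij_betw (\<lambda>(x, i). (x(i := True), i)) ?E (Sigma ?Y (\<lambda>y. {i. i < n \<and> y i}))"
    by (rule bij_betw_byWitness[where f' = "\<lambda>(y, i). (y(i := False), i)"])
       (auto simp: up_edges_def slice_fun_upd_True slice_fun_upd_False fun_upd_idem)
  then have "card ?E = card (Sigma ?Y (\<lambda>y. {i. i < n \<and> y i}))"
    by (rule bij_betw_same_card)
  also have "\<dots> = (\<Sum>y\<in>?Y. card {i. i < n \<and> y i})"
    using finite_slice by simp
  also have "\<dots> = card ?Y * Suc r"
    by (simp add: slice_def)
  finally show ?thesis .
qed

lemma card_up_edges: "card (up_edges n r) = card (slice n r) * (n - r)"
  and card_up_edges_Suc: "card (up_edges n r) = card (slice n (Suc r)) * Suc r"
  using card_up_edges_lower[of n r "\<lambda>_. True"] card_up_edges_upper[of n r "\<lambda>_. True"]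
  by simp_all

lemma slice_density_nonneg: "0 \<le> slice_density n r g"
  by (simp add: slice_density_def)

lemma slice_density_le_1: "slice_density n r g \<le> 1"
  unfolding slice_density_def
  using card_mono[OF finite_slice, of "{x \<in> slice n r. g x}" n r] by (auto simp: divide_le_eq_1)

text \<open>For monotone g the sensitive edges are those whose upper endpoint satisfies g minus those
  whose lower endpoint does, so the edge sensitivity between slices r and r+1 is the increase
  of the density of g.\<close>

lemma edge_sensitivity_monotone:
  assumes mono: "bool_monotone n g" and "r < n"
  shows "edge_sensitivity n r g = slice_density n (Suc r) g - slice_density n r g"
proof -
  let ?E = "up_edges n r"
  define U where "U = {(x, i) \<in> ?E. g (x(i := True))}"
  define L where "L = {(x, i) \<in> ?E. g x}"
  have "L \<subseteq> U"
  proof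
    fix p assume "p \<in> L"
    then obtain x i where p: "p = (x, i)" "x \<in> slice n r" "i < n" "\<not> x i" "g x"
      by (auto simp: L_def up_edges_def)
    then have "x(i := True) \<in> cube n" "x \<in> cube n"
      using slice_fun_upd_True[of x n r i] by (auto simp: slice_def)
    with mono p have "g (x(i := True))" unfolding bool_monotone_def by auto
    with \<open>p \<in> L\<close> p(1) show "p \<in> U" by (simp add: U_def L_def)
  qed
  moreover have "sensitive_edges n r g = U - L"
    using \<open>L \<subseteq> U\<close> by (auto simp: sensitive_edges_def U_def L_def)
  moreover have "finite U" using finite_up_edges by (simp add: U_def case_prod_unfold)
  ultimately have "real (card (sensitive_edges n r g)) = real (card U) - real (card L)"
    by (simp add: card_Diff_subset card_mono of_nat_diff finite_subset)
  moreover have "real (card U) / real (card ?E) = slice_density n (Suc r) g"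
    unfolding U_def card_up_edges_upper card_up_edges_Suc slice_density_def of_nat_mult
    by (rule mult_divide_mult_cancel_right) simp
  moreover have "real (card L) / real (card ?E) = slice_density n r g"
    using \<open>r < n\<close> unfolding L_def card_up_edges_lower card_up_edges slice_density_def of_nat_mult
    by (intro mult_divide_mult_cancel_right) simp
  ultimately show ?thesis
    unfolding edge_sensitivity_def by (simp add: diff_divide_distrib)
qed

lemma sum_edge_sensitivity_monotone:
  assumes "bool_monotone n g"
  shows "(\<Sum>r<n. edge_sensitivity n r g) \<le> 1"
proof -
  have "(\<Sum>r<n. edge_sensitivity n r g) = (\<Sum>r<n. slice_density n (Suc r) g - slice_density n r g)"
    using assms by (simp add: edge_sensitivity_monotone)
  also have "\<dots> = slice_density n n g - slice_density n 0 g"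
    by (rule sum_lessThan_telescope)
  also have "\<dots> \<le> 1"
    using slice_density_le_1[of n n g] slice_density_nonneg[of n 0 g] by linarith
  finally show ?thesis .
qed

lemma up_edge_endpoints_cube:
  "(x, i) \<in> up_edges n r \<Longrightarrow> x \<in> cube n \<and> x(i := True) \<in> cube n"
  using slice_fun_upd_True[of x n r i] by (auto simp: up_edges_def slice_def)

lemma sensitive_edges_cong:
  assumes "\<forall>x\<in>cube n. \<forall>y\<in>cube n. h x = h y \<longleftrightarrow> g x = g y"
  shows "sensitive_edges n r h = sensitive_edges n r g"
  using assms up_edge_endpoints_cube by (fastforce simp: sensitive_edges_def)

lemma sensitive_edges_parity_subset:
  fixes k :: nat
  assumes "\<forall>x\<in>cube n. g x = odd (card {j. j < k \<and> gs j x})"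
  shows "sensitive_edges n r g \<subseteq> (\<Union>j<k. sensitive_edges n r (gs j))"
proof
  fix p assume p: "p \<in> sensitive_edges n r g"
  then obtain x i where xi: "p = (x, i)" "(x, i) \<in> up_edges n r" "g (x(i := True)) \<noteq> g x"
    by (auto simp: sensitive_edges_def)
  with assms up_edge_endpoints_cube
  have "{j. j < k \<and> gs j (x(i := True))} \<noteq> {j. j < k \<and> gs j x}" by metis
  then obtain j where "j < k" "gs j (x(i := True)) \<noteq> gs j x" by blast
  with xi show "p \<in> (\<Union>j<k. sensitive_edges n r (gs j))"
    by (auto simp: sensitive_edges_def)
qed

lemma edge_sensitivity_parity_le:
  fixes k :: nat
  assumes "\<forall>x\<in>cube n. g x = odd (card {j. j < k \<and> gs j x})"
  shows "edge_sensitivity n r g \<le> (\<Sum>j<k. edge_sensitivity n r (gs j))"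
proof -
  have "card (sensitive_edges n r g) \<le> card (\<Union>j<k. sensitive_edges n r (gs j))"
    by (intro card_mono finite_UN_I finite_lessThan finite_sensitive_edges
        sensitive_edges_parity_subset[OF assms])
  also have "\<dots> \<le> (\<Sum>j<k. card (sensitive_edges n r (gs j)))"
    by (rule card_UN_le) simp
  finally have "real (card (sensitive_edges n r g)) \<le> (\<Sum>j<k. real (card (sensitive_edges n r (gs j))))"
    by (simp flip: of_nat_sum)
  then show ?thesis
    unfolding edge_sensitivity_def sum_divide_distrib[symmetric] by (rule divide_right_mono) simp
qed

lemma sum_edge_sensitivity_k_monotone:
  assumes "k_monotone n k g"
  shows "(\<Sum>r<n. edge_sensitivity n r g) \<le> real k"
proof -
  obtain gs where mono: "\<forall>j<k. bool_monotone n (gs j)"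
    and parity: "\<forall>x\<in>cube n. g x = odd (card {j. j < k \<and> gs j x})"
    using assms unfolding k_monotone_def by blast
  have "(\<Sum>r<n. edge_sensitivity n r g) \<le> (\<Sum>r<n. \<Sum>j<k. edge_sensitivity n r (gs j))"
    using parity by (intro sum_mono edge_sensitivity_parity_le)
  also have "\<dots> = (\<Sum>j<k. \<Sum>r<n. edge_sensitivity n r (gs j))"
    by (rule sum.swap)
  also have "\<dots> \<le> (\<Sum>j<k. 1)"
    using mono by (intro sum_mono sum_edge_sensitivity_monotone) simp
  finally show ?thesis by simp
qed

definition swap_sensitive :: "nat \<Rightarrow> nat \<Rightarrow> ((nat \<Rightarrow> bool) \<Rightarrow> 'b) \<Rightarrow> nat \<Rightarrow> nat \<Rightarrow> (nat \<Rightarrow> bool) set" where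
  "swap_sensitive n r g a b = {x \<in> slice n r. x a \<and> \<not> x b \<and> g (swap_coords a b x) \<noteq> g x}"

lemma card_swap_disagree_le:
  "card {x \<in> slice n r. g (swap_coords i j x) \<noteq> g x}
     \<le> card (swap_sensitive n r g i j) + card (swap_sensitive n r g j i)"
proof -
  have "{x \<in> slice n r. g (swap_coords i j x) \<noteq> g x}
      \<subseteq> swap_sensitive n r g i j \<union> swap_sensitive n r g j i"
  proof
    fix x assume x: "x \<in> {x \<in> slice n r. g (swap_coords i j x) \<noteq> g x}"
    then have "x i \<noteq> x j" using swap_coords_eq_self by force
    with x show "x \<in> swap_sensitive n r g i j \<union> swap_sensitive n r g j i"
      using swap_coords_commute[of i j x] by (auto simp: swap_sensitive_def)
  qed
  then have "card {x \<in> slice n r. g (swap_coords i j x) \<noteq> g x}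
      \<le> card (swap_sensitive n r g i j \<union> swap_sensitive n r g j i)"
    using finite_slice by (intro card_mono) (auto simp: swap_sensitive_def)
  also have "\<dots> \<le> card (swap_sensitive n r g i j) + card (swap_sensitive n r g j i)"
    by (rule card_Un_le)
  finally show ?thesis .
qed

text \<open>The path x \<rightarrow> x(b := True) \<leftarrow> swap_coords a b x consists of two edges between
  slices r and r+1; if g differs at its ends, one of them is sensitive.\<close>

lemma swap_sensitive_charge:
  assumes "x \<in> swap_sensitive n r g a b" "a < n" "b < n"
  shows "(x, b) \<in> sensitive_edges n r g \<or> (swap_coords a b x, a) \<in> sensitive_edges n r g"
proof -
  have x: "x \<in> slice n r" "x a" "\<not> x b" "g (swap_coords a b x) \<noteq> g x"
    using assms(1) by (auto simp: swap_sensitive_def)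
  have "(swap_coords a b x)(a := True) = x(b := True)"
    by (rule ext) (use x in \<open>auto simp: swap_coords_def\<close>)
  moreover have "(x, b) \<in> up_edges n r" "(swap_coords a b x, a) \<in> up_edges n r"
    using x assms slice_swap_coords by (auto simp: up_edges_def swap_coords_def)
  ultimately show ?thesis using x(4) by (auto simp: sensitive_edges_def)
qed

lemma card_swap_sensitive_le:
  fixes r :: nat and g :: "(nat \<Rightarrow> bool) \<Rightarrow> 'b"
  assumes "a < n" "b < n"
  defines "D \<equiv> sensitive_edges n r g"
  shows "card (swap_sensitive n r g a b)
    \<le> card {x \<in> slice n r. x a \<and> (x, b) \<in> D} + card {w \<in> slice n r. w b \<and> (w, a) \<in> D}"
proof -
  let ?X = "{x \<in> slice n r. x a \<and> (x, b) \<in> D}"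
  let ?Y = "{x \<in> swap_sensitive n r g a b. (swap_coords a b x, a) \<in> D}"
  have "card (swap_sensitive n r g a b) \<le> card (?X \<union> ?Y)"
    using swap_sensitive_charge[OF _ assms(1,2)] finite_slice
    by (intro card_mono) (auto simp: D_def swap_sensitive_def)
  also have "\<dots> \<le> card ?X + card ?Y"
    by (rule card_Un_le)
  also have "card ?Y \<le> card {w \<in> slice n r. w b \<and> (w, a) \<in> D}"
  proof (rule card_inj_on_le)
    show "inj_on (swap_coords a b) ?Y"
      by (metis (no_types, lifting) inj_onI swap_coords_swap_coords)
    show "swap_coords a b ` ?Y \<subseteq> {w \<in> slice n r. w b \<and> (w, a) \<in> D}"
    proof
      fix w assume "w \<in> swap_coords a b ` ?Y"
      then obtain x where x: "x \<in> swap_sensitive n r g a b" "(w, a) \<in> D" "w = swap_coords a b x"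
        by blast
      then have "w \<in> slice n r"
        using assms by (auto simp: swap_sensitive_def intro: slice_swap_coords)
      moreover have "w b"
        using x by (simp add: swap_sensitive_def swap_coords_def)
      ultimately show "w \<in> {w \<in> slice n r. w b \<and> (w, a) \<in> D}"
        using x by simp
    qed
  qed (simp add: finite_slice)
  finally show ?thesis by simp
qed

lemma sum_card_edges_from_ones:
  assumes "D \<subseteq> slice n r \<times> {..<n}"
  shows "(\<Sum>a<n. \<Sum>b<n. card {x \<in> slice n r. x a \<and> (x, b) \<in> D}) = r * card D"
proof -
  let ?S = "slice n r"
  have card_sum: "card {x \<in> A. P x} = (\<Sum>x\<in>A. of_bool (P x))" if "finite A" for A and P :: "'a \<Rightarrow> bool"
    using that by (simp add: Int_def conj_commute)
  have ones: "(\<Sum>a<n. of_bool (x a) :: nat) = r" if "x \<in> ?S" for x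
  proof -
    have "{..<n} \<inter> {a. x a} = {a. a < n \<and> x a}" by auto
    with that show ?thesis by (simp add: slice_def)
  qed
  have "(\<Sum>a<n. \<Sum>b<n. card {x \<in> ?S. x a \<and> (x, b) \<in> D})
      = (\<Sum>a<n. \<Sum>b<n. \<Sum>x\<in>?S. of_bool (x a) * of_bool ((x, b) \<in> D))"
    by (simp only: card_sum[OF finite_slice] of_bool_conj)
  also have "\<dots> = (\<Sum>a<n. \<Sum>x\<in>?S. \<Sum>b<n. of_bool (x a) * of_bool ((x, b) \<in> D))"
    by (rule sum.cong[OF refl], rule sum.swap)
  also have "\<dots> = (\<Sum>x\<in>?S. \<Sum>a<n. \<Sum>b<n. of_bool (x a) * of_bool ((x, b) \<in> D))"
    by (rule sum.swap)
  also have "\<dots> = (\<Sum>x\<in>?S. (\<Sum>a<n. of_bool (x a)) * (\<Sum>b<n. of_bool ((x, b) \<in> D)))"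
    by (simp only: sum_product)
  also have "\<dots> = (\<Sum>x\<in>?S. r * (\<Sum>b<n. of_bool ((x, b) \<in> D)))"
    by (intro sum.cong refl) (simp only: ones)
  also have "\<dots> = r * (\<Sum>x\<in>?S. \<Sum>b<n. of_bool ((x, b) \<in> D))"
    by (simp only: sum_distrib_left)
  also have "(\<Sum>x\<in>?S. \<Sum>b<n. of_bool ((x, b) \<in> D)) = card {p \<in> ?S \<times> {..<n}. p \<in> D}"
    by (simp only: sum.cartesian_product' card_sum finite_SigmaI finite_slice finite_lessThan)
  also have "{p \<in> ?S \<times> {..<n}. p \<in> D} = D"
    using assms by auto
  finally show ?thesis .
qed

lemma sum_lower_triangle_symmetrize:
  fixes G :: "nat \<Rightarrow> nat \<Rightarrow> 'a :: comm_monoid_add"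
  assumes "\<And>a. G a a = 0"
  shows "(\<Sum>j<n. \<Sum>i<j. G i j + G j i) = (\<Sum>a<n. \<Sum>b<n. G a b)"
proof (induction n)
  case (Suc n)
  have "(\<Sum>a<Suc n. \<Sum>b<Suc n. G a b)
      = (\<Sum>a<n. \<Sum>b<n. G a b) + (\<Sum>a<n. G a n) + (\<Sum>b<n. G n b) + G n n"
    by (simp add: sum.distrib algebra_simps)
  with Suc assms show ?case by (simp add: sum.distrib algebra_simps)
qed simp

lemma sum_card_swap_disagree_le:
  "(\<Sum>j<n. \<Sum>i<j. card {x \<in> slice n r. g (swap_coords i j x) \<noteq> g x})
     \<le> 2 * r * card (sensitive_edges n r g)"
proof -
  let ?D = "sensitive_edges n r g"
  let ?G = "\<lambda>a b. card (swap_sensitive n r g a b)"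
  define X where "X a b = card {x \<in> slice n r. x a \<and> (x, b) \<in> ?D}" for a b
  have D: "?D \<subseteq> slice n r \<times> {..<n}"
    by (auto simp: sensitive_edges_def up_edges_def)
  have "(\<Sum>j<n. \<Sum>i<j. card {x \<in> slice n r. g (swap_coords i j x) \<noteq> g x})
      \<le> (\<Sum>j<n. \<Sum>i<j. ?G i j + ?G j i)"
    by (intro sum_mono card_swap_disagree_le)
  also have "\<dots> = (\<Sum>a<n. \<Sum>b<n. ?G a b)"
  proof (rule sum_lower_triangle_symmetrize)
    fix a
    have "swap_sensitive n r g a a = {}" by (auto simp: swap_sensitive_def)
    then show "?G a a = 0" by simp
  qed
  also have "\<dots> \<le> (\<Sum>a<n. \<Sum>b<n. X a b + X b a)"
    unfolding X_def by (intro sum_mono card_swap_sensitive_le) auto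
  also have "\<dots> = (\<Sum>a<n. \<Sum>b<n. X a b) + (\<Sum>a<n. \<Sum>b<n. X b a)"
    by (simp only: sum.distrib)
  also have "(\<Sum>a<n. \<Sum>b<n. X b a) = (\<Sum>b<n. \<Sum>a<n. X b a)"
    by (rule sum.swap)
  also have "(\<Sum>a<n. \<Sum>b<n. X a b) = r * card ?D"
    unfolding X_def by (rule sum_card_edges_from_ones[OF D])
  finally show ?thesis by simp
qed

text \<open>With C swap-disagreements and d sensitive edges, I[g|_r] = 2C/(nN) \<le> 4rd/(nN), while
  the layer has N(n-r) edges; the lost factor 4r(n-r)/n^2 is at most 1.\<close>

lemma slice_total_inf_le_edge_sensitivity:
  assumes "r < n"
  shows "slice_total_inf n r g \<le> real n * edge_sensitivity n r g"
proof -
  define C where "C = (\<Sum>j<n. \<Sum>i<j. card {x \<in> slice n r. g (swap_coords i j x) \<noteq> g x})"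
  define d where "d = card (sensitive_edges n r g)"
  define N where "N = card (slice n r)"
  have pos: "real N > 0" "real n - real r > 0"
    using assms card_slice_pos[of r n] by (simp_all add: N_def)
  have "C \<le> 2 * r * d"
    unfolding C_def d_def by (rule sum_card_swap_disagree_le)
  then have "real C \<le> 2 * real r * real d"
    by (metis of_nat_le_iff of_nat_mult of_nat_numeral)
  have "4 * real r * (real n - real r) \<le> real n ^ 2"
    using zero_le_power2[of "real n - 2 * real r"] by (simp add: power2_eq_square algebra_simps)
  have "2 * real C * (real n - real r) \<le> 2 * (2 * real r * real d) * (real n - real r)"
    using \<open>real C \<le> 2 * real r * real d\<close> pos by (intro mult_right_mono) linarith+
  also have "\<dots> = (4 * real r * (real n - real r)) * real d"
    by (simp add: algebra_simps)
  also have "\<dots> \<le> real n ^ 2 * real d"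
    using \<open>4 * real r * (real n - real r) \<le> real n ^ 2\<close> by (intro mult_right_mono) simp_all
  finally have "2 * real C * (real n - real r) \<le> real n ^ 2 * real d" .
  then have "2 * real C / (real n * real N)
      \<le> real n ^ 2 * real d / (real n * real N * (real n - real r))"
    using pos assms by (simp add: le_divide_eq)
  also have "\<dots> = real n * (real d / (real N * (real n - real r)))"
    using assms by (simp add: power2_eq_square)
  also have "2 * real C / (real n * real N) = slice_total_inf n r g"
    unfolding slice_total_inf_def slice_inf_ij_def C_def N_def
    by (simp add: of_nat_sum sum_divide_distrib sum_distrib_left)
  also have "real d / (real N * (real n - real r)) = edge_sensitivity n r g"
    using assms by (simp add: edge_sensitivity_def card_up_edges d_def N_def of_nat_diff)
  finally show ?thesis .
qed

theorem proposition1: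
  fixes n k :: nat and f :: "(nat \<Rightarrow> bool) \<Rightarrow> real"
  assumes "\<forall>x\<in>cube n. f x = 1 \<or> f x = -1"
    and "pm_k_monotone n k f"
  shows "(\<Sum>r<n. slice_total_inf n r f) \<le> real k * real n"
proof -
  let ?h = "\<lambda>x. (1 - f x) / 2 = 1"
  have "f x = f y \<longleftrightarrow> ?h x = ?h y" if "x \<in> cube n" "y \<in> cube n" for x y
  proof -
    have "f x = 1 \<or> f x = -1" "f y = 1 \<or> f y = -1" using assms(1) that by auto
    then show ?thesis by auto
  qed
  then have "sensitive_edges n r f = sensitive_edges n r ?h" for r
    by (intro sensitive_edges_cong) blast
  then have "(\<Sum>r<n. edge_sensitivity n r f) \<le> real k"
    using sum_edge_sensitivity_k_monotone[of n k ?h] assms(2)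
    by (simp add: edge_sensitivity_def pm_k_monotone_def)
  moreover have "(\<Sum>r<n. slice_total_inf n r f) \<le> real n * (\<Sum>r<n. edge_sensitivity n r f)"
    unfolding sum_distrib_left by (intro sum_mono slice_total_inf_le_edge_sensitivity) simp
  ultimately show ?thesis
    by (metis mult.commute mult_left_mono of_nat_0_le_iff order_trans)
qed

end
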